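(* Let $F:\mathbb{R}^N\to\mathbb{R}\cup\{+\infty\}$ be convex, proper and lower semicontinuous, $A\in C^1(\operatorname{dom}F;\mathbb{R}^M)$, $J(x):=\frac12\|A(x)\|^2+F(x)$, and for $z^k\in\operatorname{dom}F$ let $J_k(x):=\frac12\|A(z^k)+\nabla A(z^k)^*(x-z^k)\|^2+F(x)$. (a) Let $\rho>0$ and let $\tilde x^k$ be such that some $e^k\in\partial J_k(\tilde x^k)$ satisfies $\|e^k\|\le\rho\|\tilde x^k-z^k\|$. Put $q^k:=e^k-\nabla A(z^k)[A(z^k)+\nabla A(z^k)^*(\tilde x^k-z^k)]\in\partial F(\tilde x^k)$. Suppose that $$F(z^k)-F(\tilde x^k)\ge\langle q^k,z^k-\tilde x^k\rangle+\tfrac12\|z^k-\tilde x^k\|_{\Gamma_k}^2$$ for some symmetric operator $\Gamma_k$ with $\nabla A(z^k)\nabla A(z^k)^*+\Gamma_k\ge(2\rho+\beta)\mathrm{Id}$ for some $\beta>0$. Then $$J(z^k)-J_k(\tilde x^k)\ge\tfrac\beta2\|\tilde x^k-z^k\|^2.$$ (b) Suppose moreover that Assumption 2.1 holds for $z^0$, that $\varepsilon\in(0,\beta)$ and $w$ satisfies $0<w\le\min\{1,\ \mathfrak d/\sqrt{2\beta^{-1}(J(z^0)-\inf F)},\ (\beta-\varepsilon)/(2CA_{\max})\}$, and that the iterates are generated by $z^{k+1}:=(1-w)z^k+w\tilde x^k$, where for every $k$ the point $\tilde x^k$ is an approximate minimiser of $J_k$ (no proximal term) satisfying the accuracy condition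 of (a) with the same $\rho$, and the hypothesis of (a) holds for every $k$ with the same $\beta$. Then: $J(z^k)$ decreases monotonically to some $L\in\mathbb{R}$; every accumulation point $\hat x$ of $\{z^k\}$ is Clarke-critical with $J(\hat x)=L$; and, with $V_L:=\{\hat x\in\operatorname{dom}F\mid0\in\partial_CJ(\hat x),J(\hat x)=L\}$, whenever $V_L=U_1\cup U_2$ with $U_1,U_2$ disjoint closed sets, all accumulation points lie in the same $U_j$ and $\operatorname{dist}(z^k,U_j)\to0$.
   Context: $\nabla A(y)\in\mathbb{R}^{N\times M}$ denotes the transpose of the Jacobian of $A$ at $y$. For a symmetric operator $\Gamma$, $\|x\|_\Gamma^2:=\langle\Gamma x,x\rangle$; operator inequalities $S\ge T$ mean $S-T$ is positive semidefinite. $\partial$ is the convex subdifferential. Assumption 2.1 (for given $z^0$): $\operatorname{lev}_{J(z^0)}J:=\{x\mid J(x)\le J(z^0)\}$ is bounded, $\inf F>-\infty$, $A_{\max}:=\sup_{z\in\operatorname{dom}F}\|A(z)\|<\infty$, and there are $\mathfrak d,C>0$ with $\|A(x)-A(y)-\nabla A(y)^*(x-y)\|\le C\|x-y\|^2$ for all $y\in\operatorname{lev}_{J(z^0)}J$ and $x$ with $\|x-y\|\le\mathfrak d$. Clarke subdifferential: $\partial_CJ(x)=\nabla A(x)A(x)+\partial F(x)$; $x$ is Clarke-critical if $0\in\partial_CJ(x)$. The middle term of the bound on $w$ is $+\infty$ if $J(z^0)=\inf F$. *)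

theory Defs
  imports "HOL-Analysis.Analysis"
begin

definition effdom :: "('a \<Rightarrow> ereal) \<Rightarrow> 'a set" where
  "effdom F = {x. F x < \<infinity>}"

definition proper_fun :: "('a \<Rightarrow> ereal) \<Rightarrow> bool" where
  "proper_fun F \<longleftrightarrow> (\<forall>x. F x \<noteq> -\<infinity>) \<and> (\<exists>x. F x < \<infinity>)"

definition convex_fun :: "('a::real_vector \<Rightarrow> ereal) \<Rightarrow> bool" where
  "convex_fun F \<longleftrightarrow> (\<forall>x y. \<forall>t::real. 0 < t \<and> t < 1 \<longrightarrow>
      F ((1 - t) *\<^sub>R x + t *\<^sub>R y) \<le> ereal (1 - t) * F x + ereal t * F y)"

definition lsc_fun :: "('a::topological_space \<Rightarrow> ereal) \<Rightarrow> bool" where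
  "lsc_fun F \<longleftrightarrow> (\<forall>x. F x \<le> Liminf (at x) F)"

definition subdiff :: "('a::real_inner \<Rightarrow> ereal) \<Rightarrow> 'a \<Rightarrow> 'a set" where
  "subdiff G x = {g. G x < \<infinity> \<and> (\<forall>y. G x + ereal (g \<bullet> (y - x)) \<le> G y)}"

definition Jfun :: "(real^'n \<Rightarrow> real^'m) \<Rightarrow> (real^'n \<Rightarrow> ereal) \<Rightarrow> real^'n \<Rightarrow> ereal" where
  "Jfun A F x = ereal (1/2 * (norm (A x))\<^sup>2) + F x"

text \<open>DA y is the Jacobian matrix of A at y (an M x N matrix), so that
  nabla A(y)^* h = DA y *v h and nabla A(y) u = transpose (DA y) *v u.
  J_k(x) = 1/2 |A(z) + nabla A(z)^*(x - z)|^2 + F(x).\<close>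
definition Jlin :: "(real^'n \<Rightarrow> real^'m) \<Rightarrow> (real^'n \<Rightarrow> real^'n^'m) \<Rightarrow> (real^'n \<Rightarrow> ereal)
    \<Rightarrow> real^'n \<Rightarrow> real^'n \<Rightarrow> ereal" where
  "Jlin A DA F z x = ereal (1/2 * (norm (A z + DA z *v (x - z)))\<^sup>2) + F x"

definition op_ge :: "real^'n^'n \<Rightarrow> real^'n^'n \<Rightarrow> bool" where
  "op_ge S T \<longleftrightarrow> (\<forall>v. 0 \<le> v \<bullet> ((S - T) *v v))"

definition clarke_subdiff :: "(real^'n \<Rightarrow> real^'m) \<Rightarrow> (real^'n \<Rightarrow> real^'n^'m) \<Rightarrow> (real^'n \<Rightarrow> ereal)
    \<Rightarrow> real^'n \<Rightarrow> (real^'n) set" where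
  "clarke_subdiff A DA F x = {transpose (DA x) *v A x + q | q. q \<in> subdiff F x}"

definition accumulation_point :: "(nat \<Rightarrow> 'a::topological_space) \<Rightarrow> 'a \<Rightarrow> bool" where
  "accumulation_point z p \<longleftrightarrow> (\<exists>r. strict_mono r \<and> (z \<circ> r) \<longlonglongrightarrow> p)"

end

theory Submission
  imports Defs
begin

(*
  Part (a): the decomposition of e^k is the sum rule for the subdifferential of a convex function
  plus the smooth quadratic part of J_k.  Expanding that quadratic, the operator inequality
  nabla A nabla A^* + Gamma_k >= (2 rho + beta) Id together with <e^k, x - z^k> <= rho |x - z^k|^2
  leaves exactly beta/2 |x - z^k|^2.

  Part (b): convexity of F along the relaxed step and the Taylor bound on A give
  J(z^{k+1}) <= (1 - w) J(z^k) + w J_k(x^k) + C A_max |z^{k+1} - z^k|^2, so by (a) and the bound on w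
  the objective drops by w eps/2 |x^k - z^k|^2; the other bound on w keeps every step within the
  Taylor radius of the level set.  Hence J(z^k) decreases to some L and x^k - z^k -> 0, and the
  closedness of the graph of the subdifferential of F makes every accumulation point
  Clarke-critical with value L.  The last claim holds for any bounded sequence whose steps tend
  to zero: it cannot pass infinitely often between two closed sets at positive distance.
*)

lemma proper_fun_eq_ereal:
  assumes "proper_fun F" "x \<in> effdom F"
  shows "F x = ereal (real_of_ereal (F x))"
  using assms unfolding proper_fun_def effdom_def by (cases "F x") auto

lemma Jfun_eq_ereal:
  assumes "proper_fun F" "x \<in> effdom F"
  shows "Jfun A F x = ereal (1/2 * (norm (A x))\<^sup>2 + real_of_ereal (F x))"
  using proper_fun_eq_ereal[OF assms] unfolding Jfun_def by (metis plus_ereal.simps(1))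

lemma Jlin_eq_ereal:
  assumes "proper_fun F" "x \<in> effdom F"
  shows "Jlin A DA F z x = ereal (1/2 * (norm (A z + DA z *v (x - z)))\<^sup>2 + real_of_ereal (F x))"
  using proper_fun_eq_ereal[OF assms] unfolding Jlin_def by (metis plus_ereal.simps(1))

lemma subdiff_imp_effdom: "g \<in> subdiff G x \<Longrightarrow> G x < \<infinity>"
  unfolding subdiff_def by simp

lemma convex_fun_combination:
  fixes F :: "'a::real_vector \<Rightarrow> ereal"
  assumes F: "proper_fun F" "convex_fun F"
    and xy: "x \<in> effdom F" "y \<in> effdom F" and w: "0 < w" "w \<le> 1"
  shows "(1 - w) *\<^sub>R x + w *\<^sub>R y \<in> effdom F"
    and "real_of_ereal (F ((1 - w) *\<^sub>R x + w *\<^sub>R y))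
           \<le> (1 - w) * real_of_ereal (F x) + w * real_of_ereal (F y)"
proof -
  obtain a b where Fa: "F x = ereal a" and Fb: "F y = ereal b"
    using proper_fun_eq_ereal[OF F(1)] xy by blast
  have le: "F ((1 - w) *\<^sub>R x + w *\<^sub>R y) \<le> ereal ((1 - w) * a + w * b)"
  proof (cases "w = 1")
    case True then show ?thesis using Fb by simp
  next
    case False
    then have "F ((1 - w) *\<^sub>R x + w *\<^sub>R y) \<le> ereal (1 - w) * F x + ereal w * F y"
      using F(2) w unfolding convex_fun_def by simp
    then show ?thesis by (simp add: Fa Fb)
  qed
  then show dom: "(1 - w) *\<^sub>R x + w *\<^sub>R y \<in> effdom F"
    unfolding effdom_def by (auto intro: le_less_trans)
  show "real_of_ereal (F ((1 - w) *\<^sub>R x + w *\<^sub>R y)) \<le> (1 - w) * real_of_ereal (F x) + w * real_of_ereal (F y)"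
    using le proper_fun_eq_ereal[OF F(1) dom] by (simp add: Fa Fb) (metis ereal_less_eq(3))
qed

lemma inner_matrix_vector_mult: "(u::real^'m) \<bullet> (B *v (v::real^'n)) = (transpose B *v u) \<bullet> v"
  by (metis dot_lmul_matrix inner_commute transpose_matrix_vector)

lemma has_derivative_half_norm_sq_affine:
  fixes B :: "real^'n^'m"
  shows "((\<lambda>y. 1/2 * (norm (a + B *v (y - c)))\<^sup>2) has_derivative
          (\<lambda>h. (transpose B *v (a + B *v (x - c))) \<bullet> h)) (at x)"
proof -
  have "((\<lambda>y. 1/2 * ((a + B *v (y - c)) \<bullet> (a + B *v (y - c)))) has_derivative
          (\<lambda>h. 1/2 * ((B *v h) \<bullet> (a + B *v (x - c)) + (a + B *v (x - c)) \<bullet> (B *v h)))) (at x)"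
    by (auto intro!: derivative_eq_intros bounded_linear_imp_has_derivative
        simp: matrix_vector_mult_diff_distrib)
  then show ?thesis
    by (simp add: power2_norm_eq_inner inner_commute[of "B *v _"] inner_matrix_vector_mult)
qed

lemma norm_sq_convex_combination:
  fixes a b :: "'a::real_inner"
  assumes "0 \<le> w" "w \<le> 1"
  shows "(norm ((1 - w) *\<^sub>R a + w *\<^sub>R b))\<^sup>2 \<le> (1 - w) * (norm a)\<^sup>2 + w * (norm b)\<^sup>2"
proof -
  have "(1 - w) * (norm a)\<^sup>2 + w * (norm b)\<^sup>2 - (norm ((1 - w) *\<^sub>R a + w *\<^sub>R b))\<^sup>2
      = w * (1 - w) * (norm (a - b))\<^sup>2"
    unfolding power2_norm_eq_inner
    by (simp add: inner_add_left inner_add_right inner_diff_left inner_diff_right inner_commute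
        algebra_simps power2_eq_square)
  moreover have "0 \<le> w * (1 - w) * (norm (a - b))\<^sup>2" using assms by simp
  ultimately show ?thesis by linarith
qed

lemma half_norm_sq_perturbed_combination:
  fixes a b r :: "'a::real_inner"
  assumes w: "0 \<le> w" "w \<le> 1" and r: "norm r \<le> R"
    and M: "norm ((1 - w) *\<^sub>R a + w *\<^sub>R b + r) \<le> M"
  shows "1/2 * (norm ((1 - w) *\<^sub>R a + w *\<^sub>R b + r))\<^sup>2
           \<le> (1 - w) * (1/2 * (norm a)\<^sup>2) + w * (1/2 * (norm b)\<^sup>2) + M * R"
proof -
  define s where "s = (1 - w) *\<^sub>R a + w *\<^sub>R b"
  have "(norm (s + r))\<^sup>2 = (norm s)\<^sup>2 + 2 * ((s + r) \<bullet> r) - r \<bullet> r"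
    unfolding power2_norm_eq_inner by (simp add: inner_add_left inner_add_right inner_commute)
  moreover have "(s + r) \<bullet> r \<le> M * R"
    using M[folded s_def] norm_cauchy_schwarz[of "s + r" r]
      mult_mono[OF M[folded s_def] r order_trans[OF norm_ge_zero M[folded s_def]] norm_ge_zero]
    by linarith
  moreover have "(norm s)\<^sup>2 \<le> (1 - w) * (norm a)\<^sup>2 + w * (norm b)\<^sup>2"
    unfolding s_def using w by (rule norm_sq_convex_combination)
  moreover have "0 \<le> r \<bullet> r" by simp
  ultimately show ?thesis unfolding s_def by linarith
qed

lemma tendsto_matrix_vector_mult:
  fixes X :: "nat \<Rightarrow> real^'n^'m" and v :: "nat \<Rightarrow> real^'n"
  assumes "X \<longlonglongrightarrow> X0" "v \<longlonglongrightarrow> v0"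
  shows "(\<lambda>j. X j *v v j) \<longlonglongrightarrow> X0 *v v0"
proof (rule vec_tendstoI)
  fix i
  show "(\<lambda>j. (X j *v v j) $ i) \<longlonglongrightarrow> (X0 *v v0) $ i"
    unfolding matrix_vector_mult_def by (simp, intro tendsto_intros tendsto_vec_nth assms)
qed

lemma tendsto_transpose:
  fixes X :: "nat \<Rightarrow> real^'n^'m"
  assumes "X \<longlonglongrightarrow> X0"
  shows "(\<lambda>j. transpose (X j)) \<longlonglongrightarrow> transpose X0"
proof (intro vec_tendstoI)
  fix i k
  show "(\<lambda>j. transpose (X j) $ i $ k) \<longlonglongrightarrow> transpose X0 $ i $ k"
    unfolding transpose_def by (simp, intro tendsto_vec_nth assms)
qed

section \<open>Subgradients\<close>

lemma difference_quotient_tendsto_at_right: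
  fixes g :: "'a::real_inner \<Rightarrow> real"
  assumes g: "(g has_derivative (\<lambda>h. grad \<bullet> h)) (at x)"
  shows "((\<lambda>t. (g (x + t *\<^sub>R d) - g x) / t) \<longlongrightarrow> grad \<bullet> d) (at_right 0)"
proof -
  have line: "((\<lambda>t. x + t *\<^sub>R d) has_derivative (\<lambda>t. t *\<^sub>R d)) (at 0)"
    by (auto intro!: derivative_eq_intros)
  have "(g has_derivative (\<lambda>h. grad \<bullet> h)) (at (x + 0 *\<^sub>R d))"
    using g by simp
  from has_derivative_compose[OF line this]
  have "((\<lambda>t. g (x + t *\<^sub>R d)) has_derivative (*) (grad \<bullet> d)) (at 0)"
    by (rule has_derivative_eq_rhs) (simp add: fun_eq_iff)
  then have "((\<lambda>t. g (x + t *\<^sub>R d)) has_field_derivative grad \<bullet> d) (at 0)"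
    by (simp add: has_field_derivative_def)
  then have "((\<lambda>t. (g (x + t *\<^sub>R d) - g x) / t) \<longlongrightarrow> grad \<bullet> d) (at 0)"
    by (simp add: has_field_derivative_iff)
  then show ?thesis
    by (rule tendsto_mono[rotated]) (simp add: at_le)
qed

lemma subdiff_add_differentiable:
  fixes g :: "'a::real_inner \<Rightarrow> real" and F :: "'a \<Rightarrow> ereal"
  assumes F: "proper_fun F" "convex_fun F"
    and g: "(g has_derivative (\<lambda>h. grad \<bullet> h)) (at x)"
    and e: "e \<in> subdiff (\<lambda>y. ereal (g y) + F y) x"
  shows "e - grad \<in> subdiff F x"
proof -
  \<comment> \<open>Along the segment from \<open>x\<close> to \<open>y\<close>, compare the subgradient inequality for \<open>g + F\<close>
    with convexity of \<open>F\<close>, divide by \<open>t\<close> and let \<open>t \<rightarrow> 0\<^sup>+\<close>.\<close>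
  have x: "x \<in> effdom F" using e unfolding subdiff_def effdom_def by auto
  then obtain a where Fa: "F x = ereal a" using proper_fun_eq_ereal[OF F(1)] by blast
  have "a + (e - grad) \<bullet> (y - x) \<le> b" if Fb: "F y = ereal b" for y b
  proof -
    define d where "d = y - x"
    note quot = difference_quotient_tendsto_at_right[OF g, of d]
    have "e \<bullet> d - (g (x + t *\<^sub>R d) - g x) / t \<le> b - a" if t: "0 < t" "t < 1" for t
    proof -
      have "F ((1 - t) *\<^sub>R x + t *\<^sub>R y) \<le> ereal (1 - t) * F x + ereal t * F y"
        using F(2) t unfolding convex_fun_def by blast
      moreover have "(1 - t) *\<^sub>R x + t *\<^sub>R y = x + t *\<^sub>R d" by (simp add: d_def algebra_simps)
      ultimately have "F (x + t *\<^sub>R d) \<le> ereal ((1 - t) * a + t * b)"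
        by (simp add: Fa Fb)
      moreover have "ereal (g x) + F x + ereal (e \<bullet> ((x + t *\<^sub>R d) - x))
          \<le> ereal (g (x + t *\<^sub>R d)) + F (x + t *\<^sub>R d)"
        using e unfolding subdiff_def by blast
      ultimately have "g x + a + t * (e \<bullet> d) \<le> g (x + t *\<^sub>R d) + ((1 - t) * a + t * b)"
        unfolding Fa by (cases "F (x + t *\<^sub>R d)") auto
      moreover have "t * (e \<bullet> d - (g (x + t *\<^sub>R d) - g x) / t) = t * (e \<bullet> d) - (g (x + t *\<^sub>R d) - g x)"
        using t by (simp add: field_simps)
      ultimately have "t * (e \<bullet> d - (g (x + t *\<^sub>R d) - g x) / t) \<le> t * (b - a)"
        by (simp add: algebra_simps)
      then show ?thesis using t by simp
    qed
    then have "eventually (\<lambda>t. e \<bullet> d - (g (x + t *\<^sub>R d) - g x) / t \<le> b - a) (at_right 0)"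
      by (auto simp: eventually_at_right_field intro!: exI[of _ 1])
    from tendsto_le[OF _ tendsto_const tendsto_diff[OF tendsto_const quot] this]
    show ?thesis by (simp add: d_def inner_diff_left)
  qed
  then have "F x + ereal ((e - grad) \<bullet> (y - x)) \<le> F y" for y
    using F(1) unfolding Fa proper_fun_def by (cases "F y") auto
  then show ?thesis using x unfolding subdiff_def effdom_def by auto
qed

lemma subdiff_Jlin:
  assumes "proper_fun F" "convex_fun F" "e \<in> subdiff (Jlin A DA F z) x"
  shows "e - transpose (DA z) *v (A z + DA z *v (x - z)) \<in> subdiff F x"
proof -
  have "Jlin A DA F z = (\<lambda>y. ereal (1/2 * (norm (A z + DA z *v (y - z)))\<^sup>2) + F y)"
    unfolding Jlin_def ..
  with assms show ?thesis
    using subdiff_add_differentiable[OF assms(1,2) has_derivative_half_norm_sq_affine] by simp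
qed

lemma lsc_fun_eventually_greater:
  fixes F :: "'a::metric_space \<Rightarrow> ereal"
  assumes lsc: "lsc_fun F" and x: "x \<longlonglongrightarrow> p" and c: "c < F p"
  shows "eventually (\<lambda>j. c < F (x j)) sequentially"
proof -
  have "c < Liminf (at p) F" using lsc c unfolding lsc_fun_def by (metis less_le_trans)
  then have "eventually (\<lambda>y. c < F y) (at p)" by (rule less_LiminfD)
  then obtain d where d: "d > 0" "\<And>y. y \<noteq> p \<Longrightarrow> dist y p < d \<Longrightarrow> c < F y"
    unfolding eventually_at by auto
  have "eventually (\<lambda>j. dist (x j) p < d) sequentially" using x d(1) by (rule tendstoD)
  then show ?thesis by eventually_elim (metis c d(2))
qed

lemma lsc_fun_le_of_tendsto:
  fixes F :: "'a::metric_space \<Rightarrow> ereal"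
  assumes "lsc_fun F" "x \<longlonglongrightarrow> p" "\<And>j. F (x j) \<le> c"
  shows "F p \<le> c"
  using lsc_fun_eventually_greater[OF assms(1,2), of c] assms(3)
  by (metis eventually_sequentially le_refl not_le)

lemma subdiff_limit:
  fixes F :: "'a::real_inner \<Rightarrow> ereal"
  assumes F: "proper_fun F" "lsc_fun F"
    and x: "x \<longlonglongrightarrow> p" and q: "q \<longlonglongrightarrow> q0" and sub: "\<And>j. q j \<in> subdiff F (x j)"
    and p: "p \<in> effdom F"
  shows "q0 \<in> subdiff F p" and "(\<lambda>j. real_of_ereal (F (x j))) \<longlonglongrightarrow> real_of_ereal (F p)"
proof -
  define f where "f y = real_of_ereal (F y)" for y
  have Ff: "y \<in> effdom F \<Longrightarrow> F y = ereal (f y)" for y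
    unfolding f_def using F(1) unfolding proper_fun_def effdom_def by (cases "F y") auto
  have x_dom: "x j \<in> effdom F" for j using sub[of j] unfolding subdiff_def effdom_def by auto
  have above: "eventually (\<lambda>j. f (x j) < c) sequentially"
    if y: "y \<in> effdom F" and c: "f y - q0 \<bullet> (y - p) < c" for y c
  proof -
    have "(\<lambda>j. f y - q j \<bullet> (y - x j)) \<longlonglongrightarrow> f y - q0 \<bullet> (y - p)"
      by (intro tendsto_intros q x)
    then have "eventually (\<lambda>j. f y - q j \<bullet> (y - x j) < c) sequentially"
      using c by (rule order_tendstoD)
    moreover have "f (x j) + q j \<bullet> (y - x j) \<le> f y" for j
      using sub[of j] Ff[OF y] unfolding subdiff_def Ff[OF x_dom] by (auto dest: spec[of _ y])
    ultimately show ?thesis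
      by (elim eventually_mono) (smt (verit))
  qed
  have below: "eventually (\<lambda>j. c < f (x j)) sequentially" if "c < f p" for c
    using lsc_fun_eventually_greater[OF F(2) x, of "ereal c"] that
    by (simp add: Ff[OF p] Ff[OF x_dom])
  show "(\<lambda>j. f (x j)) \<longlonglongrightarrow> f p"
    using above[OF p] below by (intro order_tendstoI) auto
  have "f p + q0 \<bullet> (y - p) \<le> f y" if y: "y \<in> effdom F" for y
  proof (rule ccontr)
    assume contra: "\<not> ?thesis"
    define c where "c = (f y - q0 \<bullet> (y - p) + f p) / 2"
    have "eventually (\<lambda>j. f (x j) < c \<and> c < f (x j)) sequentially"
      using contra by (intro eventually_conj above[OF y] below) (auto simp: c_def)
    from eventually_happens'[OF sequentially_bot this]
    obtain j where "f (x j) < c \<and> c < f (x j)" ..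
    then show False by linarith
  qed
  then have "F p + ereal (q0 \<bullet> (y - p)) \<le> F y" for y
    using Ff[OF p] Ff[of y] unfolding effdom_def by (cases "F y < \<infinity>") (auto simp: top.not_eq_extremum)
  then show "q0 \<in> subdiff F p" using p unfolding subdiff_def effdom_def by auto
qed

section \<open>Decrease of the linearised model\<close>

lemma quadratic_model_decrease:
  fixes B :: "real^'n^'m" and \<Gamma> :: "real^'n^'n"
  assumes e: "norm e \<le> \<rho> * norm h"
    and psd: "op_ge (transpose B ** B + \<Gamma>) ((2 * \<rho> + \<beta>) *\<^sub>R mat 1)"
  shows "1/2 * (norm (u + B *v h))\<^sup>2 - 1/2 * (norm u)\<^sup>2 + \<beta>/2 * (norm h)\<^sup>2
         \<le> (e - transpose B *v (u + B *v h)) \<bullet> (- h) + 1/2 * ((- h) \<bullet> (\<Gamma> *v (- h)))"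
proof -
  have "0 \<le> h \<bullet> ((transpose B ** B + \<Gamma> - (2 * \<rho> + \<beta>) *\<^sub>R mat 1) *v h)"
    using psd unfolding op_ge_def by blast
  also have "\<dots> = h \<bullet> (transpose B *v (B *v h)) + h \<bullet> (\<Gamma> *v h) - (2 * \<rho> + \<beta>) * (h \<bullet> h)"
    by (simp add: matrix_vector_mult_diff_rdistrib matrix_vector_mult_add_rdistrib
        inner_diff_right inner_add_right matrix_vector_mul_assoc[symmetric]
        scaleR_matrix_vector_assoc[symmetric] del: transpose_matrix_vector)
  also have "h \<bullet> (transpose B *v (B *v h)) = (B *v h) \<bullet> (B *v h)"
    by (metis inner_commute inner_matrix_vector_mult)
  finally have hBh: "(2 * \<rho> + \<beta>) * (h \<bullet> h) \<le> (B *v h) \<bullet> (B *v h) + h \<bullet> (\<Gamma> *v h)"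
    by simp
  have "e \<bullet> h \<le> norm e * norm h" by (rule norm_cauchy_schwarz)
  also have "\<dots> \<le> \<rho> * (h \<bullet> h)"
    using mult_right_mono[OF e norm_ge_zero] by (simp add: power2_eq_square mult.assoc flip: power2_norm_eq_inner)
  finally have "e \<bullet> h \<le> \<rho> * (h \<bullet> h)" .
  moreover have "(e - transpose B *v (u + B *v h)) \<bullet> (- h) = (u + B *v h) \<bullet> (B *v h) - e \<bullet> h"
    by (simp add: inner_diff_left inner_matrix_vector_mult[symmetric] del: transpose_matrix_vector)
  ultimately show ?thesis using hBh
    by (simp add: power2_norm_eq_inner inner_add_left inner_add_right inner_commute vec.neg
        algebra_simps)
qed

lemma Jlin_model_decrease:
  assumes F: "proper_fun F" and z: "z \<in> effdom F"
    and e: "norm e \<le> \<rho> * norm (x - z)"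
    and psd: "op_ge (transpose (DA z) ** DA z + \<Gamma>) ((2 * \<rho> + \<beta>) *\<^sub>R mat 1)"
    and model: "F x + ereal ((e - transpose (DA z) *v (A z + DA z *v (x - z))) \<bullet> (z - x)
                  + 1/2 * ((z - x) \<bullet> (\<Gamma> *v (z - x)))) \<le> F z"
  shows "Jlin A DA F z x + ereal (\<beta>/2 * (norm (x - z))\<^sup>2) \<le> Jfun A F z"
proof -
  obtain c where Fc: "F z = ereal c" using proper_fun_eq_ereal[OF F z] by blast
  with model F obtain a where Fa: "F x = ereal a"
    unfolding proper_fun_def by (cases "F x") auto
  have "z - x = - (x - z)" by simp
  then show ?thesis
    using model quadratic_model_decrease[OF e psd, of "A z"]
    unfolding Jlin_def Jfun_def Fa Fc by simp
qed

section \<open>Sequences with vanishing steps\<close>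

lemma setdist_le_infdist_add: "setdist S T \<le> infdist x S + infdist x T"
  using setdist_triangle[of S T x] by (simp add: infdist_eq_setdist setdist_sym)

lemma infdist_less_imp_ex_dist_less:
  assumes "infdist x A < e" "A \<noteq> {}"
  shows "\<exists>a\<in>A. dist x a < e"
proof -
  have "bdd_below ((\<lambda>a. dist x a) ` A)" by (rule bdd_belowI[of _ 0]) auto
  then show ?thesis using assms cINF_less_iff[of A "\<lambda>a. dist x a" e] unfolding infdist_def by auto
qed

lemma accumulation_point_in_closure:
  assumes "accumulation_point z p" shows "p \<in> closure (range z)"
proof -
  obtain r where lim: "(z \<circ> r) \<longlonglongrightarrow> p" using assms unfolding accumulation_point_def by auto
  have "\<forall>k. (z \<circ> r) k \<in> closure (range z)"
    by (simp add: closure_subset[THEN subsetD])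
  from Lim_in_closed_set[OF closed_closure always_eventually[OF this] sequentially_bot lim]
  show ?thesis .
qed

lemma infdist_accumulation_points_tendsto_0:
  fixes z :: "nat \<Rightarrow> 'a::heine_borel"
  assumes bounded: "bounded (range z)"
  shows "(\<lambda>k. infdist (z k) {p. accumulation_point z p}) \<longlonglongrightarrow> 0"
proof (rule ccontr)
  define S where "S = {p. accumulation_point z p}"
  assume "\<not> ?thesis"
  then obtain r where r: "r > 0" "\<forall>N. \<exists>k\<ge>N. r \<le> infdist (z k) S"
    unfolding LIMSEQ_iff S_def by (auto simp: not_less abs_of_nonneg[OF infdist_nonneg])
  then have "infinite {k. r \<le> infdist (z k) S}"
    unfolding infinite_nat_iff_unbounded_le by auto
  then obtain s :: "nat \<Rightarrow> nat" where s: "strict_mono s" "\<And>j. r \<le> infdist (z (s j)) S"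
    using infinite_enumerate by blast
  have "bounded (range (z \<circ> s))" using bounded by (rule bounded_subset) auto
  then obtain l t where t: "strict_mono t" "((z \<circ> s) \<circ> t) \<longlonglongrightarrow> l"
    using bounded_imp_convergent_subsequence by blast
  have "l \<in> S" unfolding S_def accumulation_point_def mem_Collect_eq
  proof (intro exI conjI)
    show "strict_mono (s \<circ> t)" using s(1) t(1) by (rule strict_mono_o)
    show "(z \<circ> (s \<circ> t)) \<longlonglongrightarrow> l" using t(2) by (simp add: o_assoc)
  qed
  have "eventually (\<lambda>j. dist (((z \<circ> s) \<circ> t) j) l < r) sequentially"
    using t(2) r(1) by (rule tendstoD)
  then obtain j where "dist (z (s (t j))) l < r" by (auto simp: eventually_sequentially)
  moreover have "infdist (z (s (t j))) S \<le> dist (z (s (t j))) l" using \<open>l \<in> S\<close> by (rule infdist_le)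
  ultimately show False using s(2)[of "t j"] by linarith
qed

lemma setdist_compact_closed_pos:
  fixes S :: "'a::heine_borel set"
  assumes "compact S" "closed T" "S \<noteq> {}" "T \<noteq> {}" "S \<inter> T = {}"
  shows "0 < setdist S T"
  using setdist_eq_0_compact_closed[OF assms(1,2)] setdist_pos_le[of S T] assms(3-5)
  by (simp add: order_less_le)

lemma accumulation_point_frequently_near:
  assumes "accumulation_point z p" "0 < \<epsilon>"
  shows "\<exists>k\<ge>N. dist (z k) p < \<epsilon>"
proof -
  obtain r where r: "strict_mono r" "(z \<circ> r) \<longlonglongrightarrow> p"
    using assms(1) unfolding accumulation_point_def by blast
  obtain J where "\<And>j. J \<le> j \<Longrightarrow> dist (z (r j)) p < \<epsilon>"
    using tendstoD[OF r(2) assms(2)] by (auto simp: eventually_sequentially)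
  then show ?thesis
    using seq_suble[OF r(1), of "max N J"] by (metis max.bounded_iff order_refl order_trans)
qed

lemma accumulation_point_infdist_ge:
  assumes "accumulation_point z p" "\<And>k. k0 \<le> k \<Longrightarrow> c \<le> infdist (z k) T"
  shows "c \<le> infdist p T"
proof -
  obtain r where r: "strict_mono r" "(z \<circ> r) \<longlonglongrightarrow> p"
    using assms(1) unfolding accumulation_point_def by blast
  show ?thesis
  proof (rule LIMSEQ_le_const)
    show "(\<lambda>j. infdist ((z \<circ> r) j) T) \<longlonglongrightarrow> infdist p T" by (intro tendsto_infdist r(2))
    show "\<exists>N. \<forall>n\<ge>N. c \<le> infdist ((z \<circ> r) n) T"
      using assms(2) seq_suble[OF r(1)] by (metis comp_apply order_trans)
  qed
qed

lemma infdist_stays_small: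
  fixes z :: "nat \<Rightarrow> 'a::metric_space"
  assumes step: "\<And>k. N \<le> k \<Longrightarrow> dist (z (Suc k)) (z k) < \<delta>/3"
    and near: "\<And>k. N \<le> k \<Longrightarrow> infdist (z k) V < \<delta>/3 \<or> infdist (z k) W < \<delta>/3"
    and sep: "\<delta> \<le> setdist V W"
    and start: "N \<le> k0" "infdist (z k0) V < \<delta>/3"
    and k: "k0 \<le> k"
  shows "infdist (z k) V < \<delta>/3"
  using k
proof (induction k rule: dec_induct)
  case base show ?case using start(2) .
next
  case (step k)
  have "infdist (z (Suc k)) V \<le> infdist (z k) V + dist (z (Suc k)) (z k)"
    by (rule infdist_triangle)
  moreover have "dist (z (Suc k)) (z k) < \<delta>/3" using step.hyps start(1) by (intro assms(1)) simp
  moreover have "\<delta> \<le> infdist (z (Suc k)) V + infdist (z (Suc k)) W"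
    using sep setdist_le_infdist_add[of V W] by (rule order_trans)
  ultimately have "\<not> infdist (z (Suc k)) W < \<delta>/3" using step.IH by linarith
  then show ?case using near[of "Suc k"] step.hyps start(1) by simp
qed

lemma accumulation_points_stay_in_closed_part:
  fixes z :: "nat \<Rightarrow> 'a::heine_borel"
  assumes bounded: "bounded (range z)"
    and steps: "(\<lambda>k. dist (z (Suc k)) (z k)) \<longlonglongrightarrow> 0"
    and U: "closed U1" "closed U2" "U1 \<inter> U2 = {}"
    and acc_U: "\<And>p. accumulation_point z p \<Longrightarrow> p \<in> U1 \<union> U2"
    and p1: "accumulation_point z p1" "p1 \<in> U1"
    and p: "accumulation_point z p"
  shows "p \<in> U1"
proof (cases "U2 = {}")
  case True then show ?thesis using acc_U[OF p] by simp
next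
  case False
  define S where "S = {p. accumulation_point z p}"
  define V where "V = U1 \<inter> closure (range z)"
  define \<delta> where "\<delta> = setdist V U2"
  \<comment> \<open>Eventually every iterate is \<open>\<delta>/3\<close>-close to \<open>V\<close> or to \<open>U2\<close>, and steps are shorter than
    \<open>\<delta>/3\<close>; so once an iterate is close to \<open>V\<close> all later ones are.\<close>
  have "p1 \<in> V" using p1 accumulation_point_in_closure unfolding V_def by blast
  moreover have "compact V" unfolding V_def using U(1) bounded by auto
  moreover have "V \<inter> U2 = {}" using U(3) unfolding V_def by blast
  ultimately have "\<delta> > 0"
    unfolding \<delta>_def using U(2) False by (intro setdist_compact_closed_pos) auto
  then have "\<delta>/3 > 0" by simp
  have "eventually (\<lambda>k. infdist (z k) S < \<delta>/3) sequentially"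
    using infdist_accumulation_points_tendsto_0[OF bounded] \<open>\<delta>/3 > 0\<close>
    unfolding S_def by (rule order_tendstoD)
  moreover have "eventually (\<lambda>k. dist (z (Suc k)) (z k) < \<delta>/3) sequentially"
    using steps \<open>\<delta>/3 > 0\<close> by (rule order_tendstoD)
  ultimately have "eventually (\<lambda>k. infdist (z k) S < \<delta>/3 \<and> dist (z (Suc k)) (z k) < \<delta>/3) sequentially"
    by (rule eventually_conj)
  then obtain N where N: "\<And>k. N \<le> k \<Longrightarrow> infdist (z k) S < \<delta>/3 \<and> dist (z (Suc k)) (z k) < \<delta>/3"
    by (auto simp: eventually_sequentially)
  have near: "infdist (z k) V < \<delta>/3 \<or> infdist (z k) U2 < \<delta>/3" if k: "N \<le> k" for k
  proof -
    have "S \<noteq> {}" using p1(1) unfolding S_def by blast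
    with N[OF k] obtain s where s: "accumulation_point z s" "dist (z k) s < \<delta>/3"
      using infdist_less_imp_ex_dist_less[of "z k" S] unfolding S_def by blast
    then have "s \<in> V \<or> s \<in> U2"
      using acc_U accumulation_point_in_closure unfolding V_def by blast
    then show ?thesis
      using s(2) infdist_le[of s V "z k"] infdist_le[of s U2 "z k"] by linarith
  qed
  obtain k0 where "N \<le> k0" "dist (z k0) p1 < \<delta>/3"
    using accumulation_point_frequently_near[OF p1(1) \<open>\<delta>/3 > 0\<close>] by blast
  then have k0: "N \<le> k0" "infdist (z k0) V < \<delta>/3"
    using infdist_le[OF \<open>p1 \<in> V\<close>, of "z k0"] by simp_all
  have far: "2 * \<delta> / 3 \<le> infdist (z k) U2" if "k0 \<le> k" for k
    using infdist_stays_small[of N z \<delta> V U2, OF _ near _ k0 that] N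
      setdist_le_infdist_add[of V U2 "z k"] unfolding \<delta>_def by fastforce
  have "2 * \<delta> / 3 \<le> infdist p U2"
    using far by (rule accumulation_point_infdist_ge[OF p])
  then have "p \<notin> U2" using \<open>\<delta> > 0\<close> by auto
  then show ?thesis using acc_U[OF p] by blast
qed

lemma accumulation_points_in_one_closed_part:
  fixes z :: "nat \<Rightarrow> 'a::heine_borel"
  assumes bounded: "bounded (range z)"
    and steps: "(\<lambda>k. dist (z (Suc k)) (z k)) \<longlonglongrightarrow> 0"
    and U: "closed U1" "closed U2" "U1 \<inter> U2 = {}"
    and acc_U: "\<And>p. accumulation_point z p \<Longrightarrow> p \<in> U1 \<union> U2"
  shows "\<exists>U\<in>{U1, U2}. U \<noteq> {} \<and> (\<forall>p. accumulation_point z p \<longrightarrow> p \<in> U)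
            \<and> (\<lambda>k. infdist (z k) U) \<longlonglongrightarrow> 0"
proof -
  define S where "S = {p. accumulation_point z p}"
  obtain p0 where p0: "p0 \<in> S"
    using bounded_imp_convergent_subsequence[OF bounded] unfolding S_def accumulation_point_def by blast
  obtain U where U_cases: "U \<in> {U1, U2}" and "S \<subseteq> U"
  proof (cases "p0 \<in> U1")
    case True
    then have "S \<subseteq> U1"
      using accumulation_points_stay_in_closed_part[OF bounded steps U acc_U] p0
      unfolding S_def by blast
    then show ?thesis using that by blast
  next
    case False
    then have "p0 \<in> U2" using acc_U p0 unfolding S_def by blast
    have "p \<in> U2" if "accumulation_point z p" for p
      by (rule accumulation_points_stay_in_closed_part[of z U2 U1 p0 p])
        (use bounded steps U acc_U p0 \<open>p0 \<in> U2\<close> that in \<open>auto simp: S_def\<close>)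
    then have "S \<subseteq> U2" unfolding S_def by blast
    then show ?thesis using that by blast
  qed
  have "(\<lambda>k. infdist (z k) U) \<longlonglongrightarrow> 0"
  proof (rule tendsto_sandwich[OF _ _ tendsto_const])
    show "(\<lambda>k. infdist (z k) S) \<longlonglongrightarrow> 0"
      unfolding S_def by (rule infdist_accumulation_points_tendsto_0[OF bounded])
    show "\<forall>\<^sub>F k in sequentially. infdist (z k) U \<le> infdist (z k) S"
      using infdist_mono[OF \<open>S \<subseteq> U\<close>] p0 by (intro always_eventually) blast
  qed (simp add: infdist_nonneg)
  then show ?thesis using U_cases \<open>S \<subseteq> U\<close> p0 unfolding S_def by blast
qed

section \<open>The relaxed linearised iteration\<close>

text \<open>The constants \<open>m\<close> and \<open>M\<close> stand for \<open>inf F\<close> and \<open>A\<^sub>m\<^sub>a\<^sub>x\<close>;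
  \<open>model_decrease\<close> is the conclusion of part (a) at every iterate.\<close>

locale relaxed_linearization =
  fixes F :: "real^'n \<Rightarrow> ereal" and A :: "real^'n \<Rightarrow> real^'m" and DA :: "real^'n \<Rightarrow> real^'n^'m"
    and z xt e :: "nat \<Rightarrow> real^'n"
    and \<rho> \<beta> \<epsilon> w d C m M :: real
  assumes F_proper: "proper_fun F" and F_convex: "convex_fun F" and F_lsc: "lsc_fun F"
    and A_cont: "continuous_on (effdom F) A" and DA_cont: "continuous_on (effdom F) DA"
    and z0_dom: "z 0 \<in> effdom F"
    and level_bounded: "bounded {x. Jfun A F x \<le> Jfun A F (z 0)}"
    and F_ge: "\<And>x. ereal m \<le> F x"
    and A_le: "\<And>x. x \<in> effdom F \<Longrightarrow> norm (A x) \<le> M"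
    and taylor: "\<And>x y. Jfun A F y \<le> Jfun A F (z 0) \<Longrightarrow> x \<in> effdom F \<Longrightarrow> norm (x - y) \<le> d \<Longrightarrow>
                   norm (A x - A y - DA y *v (x - y)) \<le> C * (norm (x - y))\<^sup>2"
    and \<beta>_pos: "0 < \<beta>" and \<epsilon>_pos: "0 < \<epsilon>" and w_pos: "0 < w" and w_le_1: "w \<le> 1"
    and w_d: "w * sqrt (2 / \<beta> * (1/2 * (norm (A (z 0)))\<^sup>2 + real_of_ereal (F (z 0)) - m)) \<le> d"
    and w_M: "w * (2 * C * M) \<le> \<beta> - \<epsilon>"
    and iterate: "\<And>k. z (Suc k) = (1 - w) *\<^sub>R z k + w *\<^sub>R xt k"
    and e_subdiff: "\<And>k. e k \<in> subdiff (Jlin A DA F (z k)) (xt k)"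
    and e_small: "\<And>k. norm (e k) \<le> \<rho> * norm (xt k - z k)"
    and model_decrease: "\<And>k. z k \<in> effdom F \<Longrightarrow>
          Jlin A DA F (z k) (xt k) + ereal (\<beta>/2 * (norm (xt k - z k))\<^sup>2) \<le> Jfun A F (z k)"
begin

definition J :: "real^'n \<Rightarrow> real" where
  "J x = 1/2 * (norm (A x))\<^sup>2 + real_of_ereal (F x)"

definition model :: "nat \<Rightarrow> real" where
  "model k = 1/2 * (norm (A (z k) + DA (z k) *v (xt k - z k)))\<^sup>2 + real_of_ereal (F (xt k))"

lemma Jfun_eq_J: "x \<in> effdom F \<Longrightarrow> Jfun A F x = ereal (J x)"
  unfolding J_def by (rule Jfun_eq_ereal[OF F_proper])

lemma xt_dom: "xt k \<in> effdom F"
  using subdiff_imp_effdom[OF e_subdiff[of k]] unfolding Jlin_def effdom_def by auto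

lemma F_real_ge: "x \<in> effdom F \<Longrightarrow> m \<le> real_of_ereal (F x)"
  using F_ge[of x] proper_fun_eq_ereal[OF F_proper] by (metis ereal_less_eq(3))

lemma J_ge: "x \<in> effdom F \<Longrightarrow> m \<le> J x"
  using F_real_ge unfolding J_def by (simp add: add_increasing)

lemma model_ge: "m \<le> model k"
  using F_real_ge[OF xt_dom] unfolding model_def by (simp add: add_increasing)

lemma model_decrease_real:
  "z k \<in> effdom F \<Longrightarrow> model k + \<beta>/2 * (norm (xt k - z k))\<^sup>2 \<le> J (z k)"
  using model_decrease[of k] Jfun_eq_J[of "z k"] Jlin_eq_ereal[OF F_proper xt_dom, of A DA "z k"]
  unfolding model_def by simp

lemma iterate_diff: "z (Suc k) - z k = w *\<^sub>R (xt k - z k)"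
  by (simp add: iterate algebra_simps)

lemma relaxed_step_le:
  assumes "z k \<in> effdom F" "J (z k) \<le> J (z 0)"
  shows "norm (z (Suc k) - z k) \<le> d"
proof -
  \<comment> \<open>Since \<open>model k \<ge> m\<close>, the decrease of part (a) bounds \<open>|xt k - z k|\<close> on the level set.\<close>
  have "\<beta>/2 * (norm (xt k - z k))\<^sup>2 \<le> J (z 0) - m"
    using model_decrease_real[OF assms(1)] model_ge[of k] assms(2) by linarith
  then have "2 / \<beta> * (\<beta>/2 * (norm (xt k - z k))\<^sup>2) \<le> 2 / \<beta> * (J (z 0) - m)"
    using \<beta>_pos by (intro mult_left_mono) auto
  then have "(norm (xt k - z k))\<^sup>2 \<le> 2 / \<beta> * (J (z 0) - m)"
    using \<beta>_pos by simp
  then have "norm (xt k - z k) \<le> sqrt (2 / \<beta> * (J (z 0) - m))"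
    by (simp add: real_le_rsqrt)
  moreover have "w * sqrt (2 / \<beta> * (J (z 0) - m)) \<le> d" using w_d unfolding J_def .
  ultimately have "w * norm (xt k - z k) \<le> d"
    using mult_left_mono[of _ _ w] w_pos by (meson less_imp_le order_trans)
  then show ?thesis using w_pos by (simp add: iterate_diff)
qed

lemma step_bound:
  assumes z: "z k \<in> effdom F" and level: "J (z k) \<le> J (z 0)"
  shows "z (Suc k) \<in> effdom F"
    and "J (z (Suc k)) \<le> (1 - w) * J (z k) + w * model k + M * (C * (norm (z (Suc k) - z k))\<^sup>2)"
proof -
  show dom: "z (Suc k) \<in> effdom F"
    unfolding iterate by (rule convex_fun_combination(1)[OF F_proper F_convex z xt_dom w_pos w_le_1])
  have F_le: "real_of_ereal (F (z (Suc k))) \<le> (1 - w) * real_of_ereal (F (z k)) + w * real_of_ereal (F (xt k))"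
    unfolding iterate by (rule convex_fun_combination(2)[OF F_proper F_convex z xt_dom w_pos w_le_1])
  define r where "r = A (z (Suc k)) - A (z k) - DA (z k) *v (z (Suc k) - z k)"
  have "Jfun A F (z k) \<le> Jfun A F (z 0)" using level Jfun_eq_J[OF z] Jfun_eq_J[OF z0_dom] by simp
  then have r_le: "norm r \<le> C * (norm (z (Suc k) - z k))\<^sup>2"
    unfolding r_def using taylor dom relaxed_step_le[OF z level] by blast
  have "A (z (Suc k)) = (1 - w) *\<^sub>R A (z k) + w *\<^sub>R (A (z k) + DA (z k) *v (xt k - z k)) + r"
    unfolding r_def iterate_diff
    by (simp add: algebra_simps matrix_scaleR_vector_ac scaleR_matrix_vector_assoc)
  then have "1/2 * (norm (A (z (Suc k))))\<^sup>2 \<le> (1 - w) * (1/2 * (norm (A (z k)))\<^sup>2)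
      + w * (1/2 * (norm (A (z k) + DA (z k) *v (xt k - z k)))\<^sup>2) + M * (C * (norm (z (Suc k) - z k))\<^sup>2)"
    using half_norm_sq_perturbed_combination[OF less_imp_le[OF w_pos] w_le_1 r_le] A_le[OF dom] by simp
  moreover have "(1 - w) * J (z k) + w * model k
      = (1 - w) * (1/2 * (norm (A (z k)))\<^sup>2) + w * (1/2 * (norm (A (z k) + DA (z k) *v (xt k - z k)))\<^sup>2)
        + ((1 - w) * real_of_ereal (F (z k)) + w * real_of_ereal (F (xt k)))"
    unfolding J_def model_def by (simp add: algebra_simps)
  ultimately show "J (z (Suc k)) \<le> (1 - w) * J (z k) + w * model k + M * (C * (norm (z (Suc k) - z k))\<^sup>2)"
    using F_le unfolding J_def by linarith
qed

lemma sufficient_decrease: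
  assumes z: "z k \<in> effdom F" and level: "J (z k) \<le> J (z 0)"
  shows "J (z (Suc k)) \<le> J (z k) - w * \<epsilon> / 2 * (norm (xt k - z k))\<^sup>2"
proof -
  have "M * (C * (norm (z (Suc k) - z k))\<^sup>2) = w * (2 * C * M) * (w * (norm (xt k - z k))\<^sup>2) / 2"
    by (simp add: iterate_diff power2_eq_square)
  also have "\<dots> \<le> (\<beta> - \<epsilon>) * (w * (norm (xt k - z k))\<^sup>2) / 2"
    using w_pos by (intro divide_right_mono mult_right_mono w_M) simp_all
  finally have "M * (C * (norm (z (Suc k) - z k))\<^sup>2) \<le> (\<beta> - \<epsilon>) * (w * (norm (xt k - z k))\<^sup>2) / 2" .
  moreover have "w * model k \<le> w * (J (z k) - \<beta>/2 * (norm (xt k - z k))\<^sup>2)"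
    using model_decrease_real[OF z] w_pos by simp
  moreover have "(1 - w) * J (z k) + w * (J (z k) - \<beta>/2 * (norm (xt k - z k))\<^sup>2)
      + (\<beta> - \<epsilon>) * (w * (norm (xt k - z k))\<^sup>2) / 2 = J (z k) - w * \<epsilon> / 2 * (norm (xt k - z k))\<^sup>2"
    by (simp add: field_simps)
  ultimately show ?thesis
    using step_bound(2)[OF z level] by linarith
qed

lemma iterates_in_level_set: "z k \<in> effdom F \<and> J (z k) \<le> J (z 0)"
proof (induction k)
  case 0 show ?case using z0_dom by simp
next
  case (Suc k)
  have "0 \<le> w * \<epsilon> / 2 * (norm (xt k - z k))\<^sup>2" using w_pos \<epsilon>_pos by simp
  moreover from Suc.IH have z: "z k \<in> effdom F" and level: "J (z k) \<le> J (z 0)" by blast+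
  ultimately have "J (z (Suc k)) \<le> J (z 0)" using sufficient_decrease[OF z level] by linarith
  then show ?case using step_bound(1)[OF z level] by blast
qed

lemma z_dom: "z k \<in> effdom F"
  using iterates_in_level_set by blast

lemma J_decrease: "J (z (Suc k)) \<le> J (z k) - w * \<epsilon> / 2 * (norm (xt k - z k))\<^sup>2"
  using sufficient_decrease iterates_in_level_set by blast

lemma bounded_iterates: "bounded (range z)"
proof (rule bounded_subset[OF level_bounded])
  show "range z \<subseteq> {x. Jfun A F x \<le> Jfun A F (z 0)}"
    using iterates_in_level_set Jfun_eq_J[OF z_dom] by auto
qed

definition J_lim :: real where
  "J_lim = lim (\<lambda>k. J (z k))"

lemma decseq_J: "decseq (\<lambda>k. J (z k))"
proof (rule decseq_SucI)
  show "J (z (Suc k)) \<le> J (z k)" for k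
  proof -
    have "0 \<le> w * \<epsilon> / 2 * (norm (xt k - z k))\<^sup>2" using w_pos \<epsilon>_pos by simp
    then show ?thesis using J_decrease[of k] by linarith
  qed
qed

lemma J_tendsto: "(\<lambda>k. J (z k)) \<longlonglongrightarrow> J_lim"
  using decseq_convergent[OF decseq_J allI[OF J_ge[OF z_dom]]] unfolding J_lim_def
  by (metis convergent_def limI)

lemma steps_tendsto_0: "(\<lambda>k. xt k - z k) \<longlonglongrightarrow> 0"
proof -
  have J_diff: "(\<lambda>k. J (z k) - J (z (Suc k))) \<longlonglongrightarrow> 0"
    using tendsto_diff[OF J_tendsto LIMSEQ_Suc[OF J_tendsto]] by simp
  have "(\<lambda>k. w * \<epsilon> / 2 * (norm (xt k - z k))\<^sup>2) \<longlonglongrightarrow> 0"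
  proof (rule tendsto_sandwich[OF _ _ tendsto_const J_diff])
    show "\<forall>\<^sub>F k in sequentially. 0 \<le> w * \<epsilon> / 2 * (norm (xt k - z k))\<^sup>2"
      using w_pos \<epsilon>_pos by simp
    show "\<forall>\<^sub>F k in sequentially. w * \<epsilon> / 2 * (norm (xt k - z k))\<^sup>2 \<le> J (z k) - J (z (Suc k))"
      using J_decrease by (simp add: algebra_simps)
  qed
  then have "(\<lambda>k. (norm (xt k - z k))\<^sup>2) \<longlonglongrightarrow> 0"
    using tendsto_mult_left[of _ 0 sequentially "2 / (w * \<epsilon>)"] w_pos \<epsilon>_pos by simp
  then have "(\<lambda>k. norm (xt k - z k)) \<longlonglongrightarrow> 0"
    using tendsto_real_sqrt by force
  then show ?thesis by (rule tendsto_norm_zero_cancel)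
qed

lemma model_tendsto: "model \<longlonglongrightarrow> J_lim"
proof -
  define lower where
    "lower k = (J (z (Suc k)) - (1 - w) * J (z k) - M * (C * (norm (z (Suc k) - z k))\<^sup>2)) / w" for k
  have "(\<lambda>k. z (Suc k) - z k) \<longlonglongrightarrow> 0"
    using tendsto_scaleR[OF tendsto_const steps_tendsto_0, of w] by (simp add: iterate_diff)
  then have "lower \<longlonglongrightarrow> (J_lim - (1 - w) * J_lim - M * (C * (norm (0::real^'n))\<^sup>2)) / w"
    unfolding lower_def using w_pos
    by (intro tendsto_divide tendsto_diff tendsto_mult tendsto_const tendsto_power
        tendsto_norm LIMSEQ_Suc J_tendsto) auto
  then have lower_tendsto: "lower \<longlonglongrightarrow> J_lim"
    using w_pos by (simp add: algebra_simps)
  have lower_le: "lower k \<le> model k" for k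
  proof -
    have "J (z (Suc k)) - (1 - w) * J (z k) - M * (C * (norm (z (Suc k) - z k))\<^sup>2) \<le> model k * w"
      using step_bound(2)[OF z_dom conjunct2[OF iterates_in_level_set[of k]]] by (simp add: mult.commute)
    then show ?thesis unfolding lower_def using w_pos by (simp add: pos_divide_le_eq)
  qed
  have model_le: "model k \<le> J (z k)" for k
  proof -
    have "0 \<le> \<beta>/2 * (norm (xt k - z k))\<^sup>2" using \<beta>_pos by simp
    then show ?thesis using model_decrease_real[OF z_dom, of k] by linarith
  qed
  show ?thesis
    by (rule tendsto_sandwich[OF _ _ lower_tendsto J_tendsto]) (simp_all add: lower_le model_le)
qed

lemma accumulation_point_dom:
  assumes "accumulation_point z p"
  shows "p \<in> effdom F"
proof -
  obtain r where r: "(z \<circ> r) \<longlonglongrightarrow> p" using assms unfolding accumulation_point_def by blast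
  have "F (z k) \<le> ereal (J (z 0))" for k
  proof -
    have "real_of_ereal (F (z k)) \<le> J (z k)" unfolding J_def by simp
    then show ?thesis
      using iterates_in_level_set[of k] proper_fun_eq_ereal[OF F_proper z_dom, of k]
      by (metis ereal_less_eq(3) order_trans)
  qed
  then have "F p \<le> ereal (J (z 0))" using lsc_fun_le_of_tendsto[OF F_lsc r] by simp
  then show ?thesis unfolding effdom_def using le_less_trans[of "F p" "ereal (J (z 0))" \<infinity>] by simp
qed

lemma accumulation_point_critical:
  assumes acc: "accumulation_point z p"
  shows "0 \<in> clarke_subdiff A DA F p" and "J p = J_lim"
proof -
  obtain r where r: "strict_mono r" "(z \<circ> r) \<longlonglongrightarrow> p" using acc unfolding accumulation_point_def by blast
  have p: "p \<in> effdom F" using accumulation_point_dom[OF acc] .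
  have zr: "(\<lambda>j. z (r j)) \<longlonglongrightarrow> p" using r(2) by (simp add: o_def)
  have hr: "(\<lambda>j. xt (r j) - z (r j)) \<longlonglongrightarrow> 0"
    using LIMSEQ_subseq_LIMSEQ[OF steps_tendsto_0 r(1)] by (simp add: o_def)
  have xtr: "(\<lambda>j. xt (r j)) \<longlonglongrightarrow> p"
    using tendsto_add[OF zr hr] by simp
  have Ar: "(\<lambda>j. A (z (r j))) \<longlonglongrightarrow> A p" and DAr: "(\<lambda>j. DA (z (r j))) \<longlonglongrightarrow> DA p"
    using continuous_on_tendsto_compose[OF A_cont zr p] continuous_on_tendsto_compose[OF DA_cont zr p]
    by (simp_all add: z_dom)
  have "(\<lambda>j. norm (e (r j))) \<longlonglongrightarrow> 0"
  proof (rule tendsto_sandwich[OF _ _ tendsto_const])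
    show "(\<lambda>j. \<rho> * norm (xt (r j) - z (r j))) \<longlonglongrightarrow> 0"
      using tendsto_mult_left[OF tendsto_norm[OF hr], of \<rho>] by simp
  qed (simp_all add: e_small)
  then have er: "(\<lambda>j. e (r j)) \<longlonglongrightarrow> 0" by (rule tendsto_norm_zero_cancel)
  define q where "q k = e k - transpose (DA (z k)) *v (A (z k) + DA (z k) *v (xt k - z k))" for k
  have "(\<lambda>j. q (r j)) \<longlonglongrightarrow> 0 - transpose (DA p) *v (A p + DA p *v 0)"
    unfolding q_def
    by (intro tendsto_diff er tendsto_matrix_vector_mult tendsto_transpose DAr tendsto_add Ar hr)
  then have qr: "(\<lambda>j. q (r j)) \<longlonglongrightarrow> - (transpose (DA p) *v A p)" by simp
  have "q (r j) \<in> subdiff F (xt (r j))" for j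
    unfolding q_def by (rule subdiff_Jlin[OF F_proper F_convex e_subdiff])
  note limit = subdiff_limit[OF F_proper F_lsc xtr qr this p]
  show "0 \<in> clarke_subdiff A DA F p"
    unfolding clarke_subdiff_def using limit(1) by force
  have "(\<lambda>j. model (r j)) \<longlonglongrightarrow> 1/2 * (norm (A p + DA p *v 0))\<^sup>2 + real_of_ereal (F p)"
    unfolding model_def
    by (intro tendsto_intros Ar tendsto_matrix_vector_mult DAr hr limit(2))
  then have "(\<lambda>j. model (r j)) \<longlonglongrightarrow> J p" unfolding J_def by simp
  moreover have "(\<lambda>j. model (r j)) \<longlonglongrightarrow> J_lim"
    using LIMSEQ_subseq_LIMSEQ[OF model_tendsto r(1)] by (simp add: o_def)
  ultimately show "J p = J_lim" by (rule LIMSEQ_unique)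
qed

lemma successive_iterates_tendsto_0: "(\<lambda>k. dist (z (Suc k)) (z k)) \<longlonglongrightarrow> 0"
  using tendsto_mult_left[OF tendsto_norm[OF steps_tendsto_0], of w] w_pos
  by (simp add: dist_norm iterate_diff)

theorem convergence:
  "decseq (\<lambda>k. Jfun A F (z k))
   \<and> (\<exists>L::real. (\<lambda>k. Jfun A F (z k)) \<longlonglongrightarrow> ereal L
      \<and> (\<forall>p. accumulation_point z p \<longrightarrow> 0 \<in> clarke_subdiff A DA F p \<and> Jfun A F p = ereal L)
      \<and> (\<forall>U1 U2. closed U1 \<and> closed U2 \<and> U1 \<inter> U2 = {}
           \<and> {p \<in> effdom F. 0 \<in> clarke_subdiff A DA F p \<and> Jfun A F p = ereal L} = U1 \<union> U2
           \<longrightarrow> (\<exists>U\<in>{U1, U2}. U \<noteq> {} \<and> (\<forall>p. accumulation_point z p \<longrightarrow> p \<in> U)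
                  \<and> (\<lambda>k. infdist (z k) U) \<longlonglongrightarrow> 0)))"
proof (intro conjI exI[of _ J_lim] allI impI)
  have Jz: "Jfun A F (z k) = ereal (J (z k))" for k by (rule Jfun_eq_J[OF z_dom])
  show "decseq (\<lambda>k. Jfun A F (z k))" using decseq_J unfolding Jz decseq_def by simp
  show "(\<lambda>k. Jfun A F (z k)) \<longlonglongrightarrow> ereal J_lim" unfolding Jz using J_tendsto by (rule tendsto_ereal)
  have crit: "p \<in> effdom F \<and> 0 \<in> clarke_subdiff A DA F p \<and> Jfun A F p = ereal J_lim"
    if "accumulation_point z p" for p
    using accumulation_point_dom[OF that] accumulation_point_critical[OF that] Jfun_eq_J by simp
  then show "0 \<in> clarke_subdiff A DA F p" "Jfun A F p = ereal J_lim" if "accumulation_point z p" for p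
    using that by blast+
  fix U1 U2 :: "(real^'n) set"
  assume U: "closed U1 \<and> closed U2 \<and> U1 \<inter> U2 = {}
    \<and> {p \<in> effdom F. 0 \<in> clarke_subdiff A DA F p \<and> Jfun A F p = ereal J_lim} = U1 \<union> U2"
  show "\<exists>U\<in>{U1, U2}. U \<noteq> {} \<and> (\<forall>p. accumulation_point z p \<longrightarrow> p \<in> U) \<and> (\<lambda>k. infdist (z k) U) \<longlonglongrightarrow> 0"
    using U crit
    by (intro accumulation_points_in_one_closed_part[OF bounded_iterates successive_iterates_tendsto_0]) auto
qed

end

lemma relaxed_linearizationI:
  fixes F :: "real^'n \<Rightarrow> ereal" and A :: "real^'n \<Rightarrow> real^'m" and DA :: "real^'n \<Rightarrow> real^'n^'m"
  assumes F: "proper_fun F" "convex_fun F" "lsc_fun F"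
    and A_deriv: "\<forall>y\<in>effdom F. (A has_derivative (\<lambda>h. DA y *v h)) (at y within effdom F)"
    and DA_cont: "continuous_on (effdom F) DA"
    and z0: "z 0 \<in> effdom F"
    and level: "bounded {x. Jfun A F x \<le> Jfun A F (z 0)}"
    and inf: "Inf (range F) > -\<infinity>"
    and A_bdd: "bounded (A ` effdom F)"
    and taylor: "\<forall>y\<in>{x. Jfun A F x \<le> Jfun A F (z 0)}. \<forall>x\<in>effdom F. norm (x - y) \<le> d \<longrightarrow>
              norm (A x - A y - DA y *v (x - y)) \<le> C * (norm (x - y))\<^sup>2"
    and \<beta>: "0 < \<beta>" and \<epsilon>: "0 < \<epsilon>" and w: "0 < w" "w \<le> 1"
    and w_d: "w * sqrt (2 / \<beta> * real_of_ereal (Jfun A F (z 0) - Inf (range F))) \<le> d"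
    and w_M: "w * (2 * C * (SUP x\<in>effdom F. norm (A x))) \<le> \<beta> - \<epsilon>"
    and iterate: "\<forall>k. z (Suc k) = (1 - w) *\<^sub>R z k + w *\<^sub>R xt k"
    and accuracy: "\<forall>k. e k \<in> subdiff (Jlin A DA F (z k)) (xt k)
              \<and> norm (e k) \<le> \<rho> * norm (xt k - z k)
              \<and> op_ge (transpose (DA (z k)) ** DA (z k) + \<Gamma> k) ((2 * \<rho> + \<beta>) *\<^sub>R mat 1)
              \<and> F (xt k) + ereal ((e k - transpose (DA (z k)) *v (A (z k) + DA (z k) *v (xt k - z k))) \<bullet> (z k - xt k)
                    + 1/2 * ((z k - xt k) \<bullet> (\<Gamma> k *v (z k - xt k)))) \<le> F (z k)"
  shows "relaxed_linearization F A DA z xt e \<rho> \<beta> \<epsilon> w d C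
           (real_of_ereal (Inf (range F))) (SUP x\<in>effdom F. norm (A x))"
proof -
  define m where "m = real_of_ereal (Inf (range F))"
  have "Inf (range F) \<le> F (z 0)" by (rule Inf_lower) simp
  also have "F (z 0) < \<infinity>" using z0 unfolding effdom_def by simp
  finally have Inf_eq: "Inf (range F) = ereal m"
    unfolding m_def using inf by (cases "Inf (range F)") auto
  obtain a where "\<forall>y\<in>A ` effdom F. norm y \<le> a" using A_bdd unfolding bounded_iff by blast
  then have bdd: "bdd_above ((\<lambda>x. norm (A x)) ` effdom F)" by (intro bdd_aboveI[of _ a]) auto
  show ?thesis
  proof (unfold_locales, fold m_def)
    show "continuous_on (effdom F) A"
      by (rule has_derivative_continuous_on) (use A_deriv in blast)
    show "ereal m \<le> F x" for x unfolding Inf_eq[symmetric] by (rule Inf_lower) simp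
    show "norm (A x) \<le> (SUP x\<in>effdom F. norm (A x))" if "x \<in> effdom F" for x
      using bdd that by (rule cSUP_upper[rotated])
    show "w * sqrt (2 / \<beta> * (1/2 * (norm (A (z 0)))\<^sup>2 + real_of_ereal (F (z 0)) - m)) \<le> d"
      using w_d Jfun_eq_ereal[OF F(1) z0, of A] unfolding Inf_eq by simp
    show "Jlin A DA F (z k) (xt k) + ereal (\<beta>/2 * (norm (xt k - z k))\<^sup>2) \<le> Jfun A F (z k)"
      if "z k \<in> effdom F" for k
      using Jlin_model_decrease[OF F(1) that] accuracy by blast
    show "z (Suc k) = (1 - w) *\<^sub>R z k + w *\<^sub>R xt k" for k using iterate by blast
    show "e k \<in> subdiff (Jlin A DA F (z k)) (xt k)" "norm (e k) \<le> \<rho> * norm (xt k - z k)" for k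
      using accuracy by blast+
    show "norm (A x - A y - DA y *v (x - y)) \<le> C * (norm (x - y))\<^sup>2"
      if "Jfun A F y \<le> Jfun A F (z 0)" "x \<in> effdom F" "norm (x - y) \<le> d" for x y
      using taylor that by blast
  qed (fact assms)+
qed

theorem lemmaA1:
  fixes F :: "real^'n \<Rightarrow> ereal"
    and A :: "real^'n \<Rightarrow> real^'m"
    and DA :: "real^'n \<Rightarrow> real^'n^'m"
  assumes F_proper: "proper_fun F"
    and F_convex: "convex_fun F"
    and F_lsc: "lsc_fun F"
    and A_deriv: "\<forall>y\<in>effdom F. (A has_derivative (\<lambda>h. DA y *v h)) (at y within effdom F)"
    and DA_cont: "continuous_on (effdom F) DA"
  shows
   "(\<forall>(\<rho>::real) (\<beta>::real) z xt e (\<Gamma>::real^'n^'n).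
       let q = e - transpose (DA z) *v (A z + DA z *v (xt - z)) in
       (\<rho> > 0 \<and> \<beta> > 0 \<and> z \<in> effdom F
        \<and> e \<in> subdiff (Jlin A DA F z) xt \<and> norm e \<le> \<rho> * norm (xt - z)
        \<and> transpose \<Gamma> = \<Gamma>
        \<and> op_ge (transpose (DA z) ** DA z + \<Gamma>) ((2 * \<rho> + \<beta>) *\<^sub>R mat 1)
        \<and> F xt + ereal (q \<bullet> (z - xt) + 1/2 * ((z - xt) \<bullet> (\<Gamma> *v (z - xt)))) \<le> F z)
       \<longrightarrow> q \<in> subdiff F xt
           \<and> Jlin A DA F z xt + ereal (\<beta> / 2 * (norm (xt - z))\<^sup>2) \<le> Jfun A F z)
    \<and>
    (\<forall>(\<rho>::real) (\<beta>::real) (\<epsilon>::real) (w::real) (d::real) (C::real)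
       (z::nat \<Rightarrow> real^'n) (xt::nat \<Rightarrow> real^'n) (e::nat \<Rightarrow> real^'n) (\<Gamma>::nat \<Rightarrow> real^'n^'n).
       (\<rho> > 0 \<and> \<beta> > 0 \<and> z 0 \<in> effdom F
        \<comment> \<open>Assumption 2.1 for z 0\<close>
        \<and> bounded {x. Jfun A F x \<le> Jfun A F (z 0)}
        \<and> Inf (range F) > -\<infinity>
        \<and> bounded (A ` effdom F)
        \<and> d > 0 \<and> C > 0
        \<and> (\<forall>y\<in>{x. Jfun A F x \<le> Jfun A F (z 0)}. \<forall>x\<in>effdom F. norm (x - y) \<le> d \<longrightarrow>
              norm (A x - A y - DA y *v (x - y)) \<le> C * (norm (x - y))\<^sup>2)
        \<comment> \<open>step size\<close>
        \<and> 0 < \<epsilon> \<and> \<epsilon> < \<beta>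
        \<and> 0 < w \<and> w \<le> 1
        \<and> w * sqrt (2 / \<beta> * real_of_ereal (Jfun A F (z 0) - Inf (range F))) \<le> d
        \<and> w * (2 * C * (SUP x\<in>effdom F. norm (A x))) \<le> \<beta> - \<epsilon>
        \<comment> \<open>iteration and the hypotheses of (a) at every k\<close>
        \<and> (\<forall>k. z (Suc k) = (1 - w) *\<^sub>R z k + w *\<^sub>R xt k)
        \<and> (\<forall>k. let q = e k - transpose (DA (z k)) *v (A (z k) + DA (z k) *v (xt k - z k)) in
              e k \<in> subdiff (Jlin A DA F (z k)) (xt k)
              \<and> norm (e k) \<le> \<rho> * norm (xt k - z k)
              \<and> transpose (\<Gamma> k) = \<Gamma> k
              \<and> op_ge (transpose (DA (z k)) ** DA (z k) + \<Gamma> k) ((2 * \<rho> + \<beta>) *\<^sub>R mat 1)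
              \<and> F (xt k) + ereal (q \<bullet> (z k - xt k)
                    + 1/2 * ((z k - xt k) \<bullet> (\<Gamma> k *v (z k - xt k)))) \<le> F (z k)))
       \<longrightarrow> decseq (\<lambda>k. Jfun A F (z k))
           \<and> (\<exists>L::real. (\<lambda>k. Jfun A F (z k)) \<longlonglongrightarrow> ereal L
              \<and> (\<forall>p. accumulation_point z p \<longrightarrow>
                     0 \<in> clarke_subdiff A DA F p \<and> Jfun A F p = ereal L)
              \<and> (\<forall>U1 U2. closed U1 \<and> closed U2 \<and> U1 \<inter> U2 = {}
                   \<and> {p \<in> effdom F. 0 \<in> clarke_subdiff A DA F p \<and> Jfun A F p = ereal L} = U1 \<union> U2
                   \<longrightarrow> (\<exists>U\<in>{U1, U2}. U \<noteq> {}
                          \<and> (\<forall>p. accumulation_point z p \<longrightarrow> p \<in> U)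
                          \<and> (\<lambda>k. infdist (z k) U) \<longlonglongrightarrow> 0))))"
proof (rule conjI, goal_cases)
  case 1
  show ?case
    unfolding Let_def
    apply (intro allI impI conjI; elim conjE)
    subgoal by (rule subdiff_Jlin[OF F_proper F_convex])
    subgoal by (rule Jlin_model_decrease[OF F_proper])
    done
next
  case 2
  show ?case
    unfolding Let_def
    apply (intro allI impI)
    subgoal premises H for \<rho> \<beta> \<epsilon> w d C z xt e \<Gamma>
      by (rule relaxed_linearization.convergence[OF relaxed_linearizationI[OF F_proper F_convex F_lsc
          A_deriv DA_cont, where \<rho> = \<rho> and \<beta> = \<beta> and \<epsilon> = \<epsilon> and w = w and d = d and C = C
          and xt = xt and e = e and \<Gamma> = \<Gamma>]]) (use H in blast)+
    done
qed

end
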